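(* Let $X_1,\dots,X_p$ be real topological vector spaces, $X=\prod_{\nu=1}^pX_\nu$, let $C$ be a convex subset of $X$, and let $\theta_\nu:X\to\mathbb{R}$, $\nu=1,\dots,p$, be continuous functions such that for every $\nu$ and every fixed $x^{-\nu}$ the function $x^\nu\mapsto\theta_\nu(x^\nu,x^{-\nu})$ is convex. Then the bifunction $f_0:X\times X\to\mathbb{R}$, $f_0(x,y):=\sum_{\nu=1}^p\big(\theta_\nu(y^\nu,y^{-\nu})-\theta_\nu(x^\nu,y^{-\nu})\big)$, has the star finite intersection property (fip$^*$) on $C$.
   Context: For $x\in X$, $x^\nu$ denotes the $\nu$-th component and $x^{-\nu}$ the vector of the other components. A bifunction $f$ has the fip$^*$ on a convex set $C$ if for every finite non-empty subset $A$ of $C$ there exists $x\in\operatorname{co}(A)$ such that $\max_{a\in A}f(a,x)\leq 0$. *)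

theory Defs
  imports "HOL-Analysis.Analysis"
begin

definition real_tvs :: "('a::{real_vector, topological_space}) itself \<Rightarrow> bool" where
  "real_tvs _ \<longleftrightarrow>
     continuous_on UNIV (\<lambda>z::'a \<times> 'a. fst z + snd z) \<and>
     continuous_on UNIV (\<lambda>z::real \<times> 'a. fst z *\<^sub>R snd z)"

text \<open>The factor spaces \<open>X_\<nu>\<close> are modelled as linear subspaces \<open>S \<nu>\<close> of a common real
topological vector space \<open>'a\<close> (with subspace topology); the index set is the finite
type \<open>'n\<close> (so \<open>p = CARD('n)\<close>). The product \<open>X\<close> is the following subset of \<open>'a ^ 'n\<close>,
carrying the product topology.\<close>
definition prod_space :: "('n::finite \<Rightarrow> 'a set) \<Rightarrow> ('a ^ 'n) set" where
  "prod_space S = {x. \<forall>\<nu>. x $ \<nu> \<in> S \<nu>}"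

text \<open>\<open>upd x \<nu> t\<close> is the point \<open>(t, x^{-\<nu>})\<close>.\<close>
definition upd :: "'a ^ 'n \<Rightarrow> 'n \<Rightarrow> 'a \<Rightarrow> 'a ^ 'n" where
  "upd x \<nu> t = (\<chi> j. if j = \<nu> then t else x $ j)"

definition f0 :: "('n::finite \<Rightarrow> 'a ^ 'n \<Rightarrow> real) \<Rightarrow> 'a ^ 'n \<Rightarrow> 'a ^ 'n \<Rightarrow> real" where
  "f0 \<theta> x y = (\<Sum>\<nu>\<in>UNIV. \<theta> \<nu> y - \<theta> \<nu> (upd y \<nu> (x $ \<nu>)))"

definition fip_star :: "('b::real_vector \<Rightarrow> 'b \<Rightarrow> real) \<Rightarrow> 'b set \<Rightarrow> bool" where
  "fip_star f C \<longleftrightarrow> (\<forall>A. finite A \<and> A \<noteq> {} \<and> A \<subseteq> C \<longrightarrow>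
      (\<exists>x \<in> convex hull A. Max ((\<lambda>a. f a x) ` A) \<le> 0))"

end

(*
  Enumerate a finite A = {b_0, ..., b_(m-1)} and parametrise co(A) by the probability simplex,
  x(t) = sum_j t_j b_j.  Convexity of each theta_nu in its own variable gives, by Jensen,
  sum_j t_j f0(b_j, x(t)) <= f0(x(t), x(t)) = 0 for every t.  The Nash map
  t_j |-> (t_j + g_j(t)) / (1 + sum_i g_i(t)) with gains g_j = max 0 (f0(b_j, x(t))) is a
  continuous self-map of the simplex; at a Brouwer fixed point the gains are proportional to t,
  and the averaged inequality forces them all to vanish, i.e. f0(b_j, x(t)) <= 0 for all j.

  Since m is arbitrary, Brouwer's theorem is needed in every finite dimension at once, which
  the library's type-indexed version cannot supply; it is therefore proved here for the cube
  [0,1]^n inside nat => real (product topology) from Kuhn's combinatorial lemma.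
*)

theory Submission
  imports Defs
begin

definition unit_cube :: "nat \<Rightarrow> (nat \<Rightarrow> real) set" where
  "unit_cube n = {x. \<forall>i. (i < n \<longrightarrow> 0 \<le> x i \<and> x i \<le> 1) \<and> (n \<le> i \<longrightarrow> x i = 0)}"

lemma tendsto_fun_iff_componentwise:
  fixes f :: "'b \<Rightarrow> 'i \<Rightarrow> 'c::topological_space"
  shows "(f \<longlongrightarrow> l) F \<longleftrightarrow> (\<forall>i. ((\<lambda>x. f x i) \<longlongrightarrow> l i) F)"
  using limitin_componentwise[of "\<lambda>i. euclidean" UNIV f l F]
  by (simp add: euclidean_product_topology)

lemma continuous_on_fun_apply [continuous_intros]:
  "continuous_on S (\<lambda>x :: 'i \<Rightarrow> 'b::topological_space. x i)"
  by (rule continuous_on_subset[OF continuous_on_product_coordinates]) simp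

lemma tendsto_fun_close:
  fixes z u :: "'b \<Rightarrow> 'i \<Rightarrow> real"
  assumes "(z \<longlongrightarrow> x) F" and "(e \<longlongrightarrow> 0) F" and "\<And>y i. \<bar>u y i - z y i\<bar> \<le> e y"
  shows "(u \<longlongrightarrow> x) F"
  unfolding tendsto_fun_iff_componentwise
proof
  fix i
  have "((\<lambda>y. u y i - z y i) \<longlongrightarrow> 0) F"
    by (rule Lim_null_comparison[OF _ assms(2)]) (simp add: assms(3))
  moreover have "((\<lambda>y. z y i) \<longlongrightarrow> x i) F"
    using assms(1) by (simp add: tendsto_fun_iff_componentwise)
  ultimately show "((\<lambda>y. u y i) \<longlongrightarrow> x i) F"
    using tendsto_add by fastforce
qed

lemma compact_unit_cube: "compact (unit_cube n)"
proof -
  have "unit_cube n = PiE UNIV (\<lambda>i. {0..if i < n then 1 else 0})"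
  proof (rule set_eqI)
    fix x :: "nat \<Rightarrow> real"
    have "(i < n \<longrightarrow> 0 \<le> x i \<and> x i \<le> 1) \<and> (n \<le> i \<longrightarrow> x i = 0) \<longleftrightarrow> x i \<in> {0..if i < n then 1 else 0}" for i
      by auto
    then show "x \<in> unit_cube n \<longleftrightarrow> x \<in> PiE UNIV (\<lambda>i. {0..if i < n then 1 else 0})"
      by (simp add: unit_cube_def PiE_iff)
  qed
  moreover have "compactin (product_topology (\<lambda>i. euclidean) UNIV) (PiE UNIV (\<lambda>i. {0..if i < n then 1 else 0::real}))"
    by (simp add: compactin_PiE)
  ultimately show ?thesis
    by (simp add: euclidean_product_topology)
qed

definition cube_grid :: "nat \<Rightarrow> nat \<Rightarrow> (nat \<Rightarrow> nat) \<Rightarrow> nat \<Rightarrow> real" where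
  "cube_grid p n x i = (if i < n then real (x i) / real p else 0)"

lemma cube_grid_in_unit_cube: "0 < p \<Longrightarrow> \<forall>j<n. x j \<le> p \<Longrightarrow> cube_grid p n x \<in> unit_cube n"
  by (auto simp: unit_cube_def cube_grid_def)

lemma kuhn_cell_le:
  fixes q r :: "nat \<Rightarrow> nat"
  assumes "\<forall>i<n. q i < p" and "\<forall>j<n. q j \<le> r j \<and> r j \<le> q j + 1"
  shows "\<forall>j<n. r j \<le> p"
  using assms by (metis Suc_eq_plus1 Suc_leI le_trans)

lemma kuhn_cell_of_self_map:
  fixes F :: "(nat \<Rightarrow> real) \<Rightarrow> nat \<Rightarrow> real" and p :: nat
  assumes p: "0 < p" and maps: "F \<in> unit_cube n \<rightarrow> unit_cube n"
  obtains q where "\<forall>i<n. q i < p"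
    and "\<forall>i<n. \<exists>r s. (\<forall>j<n. q j \<le> r j \<and> r j \<le> q j + 1) \<and> (\<forall>j<n. q j \<le> s j \<and> s j \<le> q j + 1) \<and>
           cube_grid p n r i \<le> F (cube_grid p n r) i \<and> F (cube_grid p n s) i \<le> cube_grid p n s i"
proof -
  \<comment> \<open>Sperner-type labelling: 0 where F does not lower coordinate i, forced to 0 resp. 1 on the faces x i = 0 and x i = p.\<close>
  define label :: "(nat \<Rightarrow> nat) \<Rightarrow> nat \<Rightarrow> nat" where
    "label x i = (if x i = 0 then 0 else if x i = p then 1
                  else if cube_grid p n x i \<le> F (cube_grid p n x) i then 0 else 1)" for x i
  have F_bounds: "0 \<le> F (cube_grid p n x) i \<and> F (cube_grid p n x) i \<le> 1" if "\<forall>j<n. x j \<le> p" "i < n" for x i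
    using maps cube_grid_in_unit_cube[OF p that(1)] that(2) unfolding unit_cube_def by blast
  have label0: "cube_grid p n x i \<le> F (cube_grid p n x) i"
    if "\<forall>j<n. x j \<le> p" "i < n" "label x i = 0" for x i
    using that F_bounds[OF that(1,2)] by (auto simp: label_def cube_grid_def split: if_splits)
  have label1: "F (cube_grid p n x) i \<le> cube_grid p n x i"
    if "\<forall>j<n. x j \<le> p" "i < n" "label x i \<noteq> 0" for x i
    using that F_bounds[OF that(1,2)] p by (auto simp: label_def cube_grid_def split: if_splits)
  obtain q where q_less: "\<forall>i<n. q i < p"
    and q_cell: "\<forall>i<n. \<exists>r s. (\<forall>j<n. q j \<le> r j \<and> r j \<le> q j + 1) \<and>
                   (\<forall>j<n. q j \<le> s j \<and> s j \<le> q j + 1) \<and> label r i \<noteq> label s i"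
    by (rule kuhn_lemma[OF p, of n label]) (use p in \<open>auto simp: label_def\<close>)
  show thesis
  proof (rule that[OF q_less], intro allI impI)
    fix i assume i: "i < n"
    obtain r s where r: "\<forall>j<n. q j \<le> r j \<and> r j \<le> q j + 1" and s: "\<forall>j<n. q j \<le> s j \<and> s j \<le> q j + 1"
      and rs: "label r i \<noteq> label s i"
      using q_cell i by blast
    have label_values: "label x i \<in> {0, 1}" for x
      by (simp add: label_def)
    consider "label r i = 0" "label s i \<noteq> 0" | "label s i = 0" "label r i \<noteq> 0"
      using rs label_values[of r] label_values[of s] by auto
    then show "\<exists>r s. (\<forall>j<n. q j \<le> r j \<and> r j \<le> q j + 1) \<and> (\<forall>j<n. q j \<le> s j \<and> s j \<le> q j + 1) \<and>
           cube_grid p n r i \<le> F (cube_grid p n r) i \<and> F (cube_grid p n s) i \<le> cube_grid p n s i"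
    proof cases
      case 1
      then show ?thesis
        using r s label0[OF kuhn_cell_le[OF q_less r] i] label1[OF kuhn_cell_le[OF q_less s] i] by blast
    next
      case 2
      then show ?thesis
        using r s label0[OF kuhn_cell_le[OF q_less s] i] label1[OF kuhn_cell_le[OF q_less r] i] by blast
    qed
  qed
qed

lemma unit_cube_approximate_fixpoint:
  fixes F :: "(nat \<Rightarrow> real) \<Rightarrow> nat \<Rightarrow> real" and p :: nat
  assumes p: "0 < p" and maps: "F \<in> unit_cube n \<rightarrow> unit_cube n"
  shows "\<exists>z\<in>unit_cube n. \<forall>i<n. \<exists>u\<in>unit_cube n. \<exists>v\<in>unit_cube n.
           (\<forall>j<n. \<bar>u j - z j\<bar> \<le> 1 / real p \<and> \<bar>v j - z j\<bar> \<le> 1 / real p) \<and> u i \<le> F u i \<and> F v i \<le> v i"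
proof -
  obtain q where q_less: "\<forall>i<n. q i < p"
    and q_cell: "\<forall>i<n. \<exists>r s. (\<forall>j<n. q j \<le> r j \<and> r j \<le> q j + 1) \<and> (\<forall>j<n. q j \<le> s j \<and> s j \<le> q j + 1) \<and>
           cube_grid p n r i \<le> F (cube_grid p n r) i \<and> F (cube_grid p n s) i \<le> cube_grid p n s i"
    using kuhn_cell_of_self_map[OF p maps] by blast
  have cell_in: "cube_grid p n r \<in> unit_cube n" if "\<forall>j<n. q j \<le> r j \<and> r j \<le> q j + 1" for r
    using cube_grid_in_unit_cube[OF p kuhn_cell_le[OF q_less that]] .
  have cell_close: "\<bar>cube_grid p n r j - cube_grid p n q j\<bar> \<le> 1 / real p"
    if "\<forall>j<n. q j \<le> r j \<and> r j \<le> q j + 1" for r j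
  proof (cases "j < n")
    case True
    then have "\<bar>cube_grid p n r j - cube_grid p n q j\<bar> = (real (r j) - real (q j)) / real p"
      using that by (simp add: cube_grid_def flip: diff_divide_distrib)
    also have "\<dots> \<le> 1 / real p"
      using that True p by (intro divide_right_mono) auto
    finally show ?thesis .
  qed (simp add: cube_grid_def)
  have "cube_grid p n q \<in> unit_cube n"
    using q_less p by (intro cube_grid_in_unit_cube) (auto simp: less_imp_le)
  then show ?thesis
    using q_cell cell_in cell_close by (metis (no_types, lifting))
qed

lemma brouwer_unit_cube:
  fixes F :: "(nat \<Rightarrow> real) \<Rightarrow> nat \<Rightarrow> real"
  assumes cont: "continuous_on (unit_cube n) F" and maps: "F \<in> unit_cube n \<rightarrow> unit_cube n"
  shows "\<exists>x\<in>unit_cube n. F x = x"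
proof -
  have "\<forall>k. \<exists>z u v. z \<in> unit_cube n \<and> (\<forall>i<n. u i \<in> unit_cube n \<and> v i \<in> unit_cube n \<and>
          (\<forall>j<n. \<bar>u i j - z j\<bar> \<le> 1 / real (Suc k) \<and> \<bar>v i j - z j\<bar> \<le> 1 / real (Suc k)) \<and>
          u i i \<le> F (u i) i \<and> F (v i) i \<le> v i i)"
    using unit_cube_approximate_fixpoint[OF zero_less_Suc maps] by metis
  then obtain z u v where z: "\<And>k. z k \<in> unit_cube n"
    and uv: "\<And>k i. i < n \<Longrightarrow> u k i \<in> unit_cube n \<and> v k i \<in> unit_cube n \<and>
          (\<forall>j<n. \<bar>u k i j - z k j\<bar> \<le> 1 / real (Suc k) \<and> \<bar>v k i j - z k j\<bar> \<le> 1 / real (Suc k)) \<and>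
          u k i i \<le> F (u k i) i \<and> F (v k i) i \<le> v k i i"
    by metis
  obtain x \<sigma> where x: "x \<in> unit_cube n" and \<sigma>: "strict_mono \<sigma>" and lim: "(z \<circ> \<sigma>) \<longlonglongrightarrow> x"
    using seq_compactE[OF compact_imp_seq_compact[OF compact_unit_cube], of z] z by blast
  have mesh: "(\<lambda>k. 1 / real (Suc (\<sigma> k))) \<longlonglongrightarrow> 0"
    using LIMSEQ_subseq_LIMSEQ[OF LIMSEQ_inverse_real_of_nat \<sigma>] by (simp add: o_def inverse_eq_divide)
  have close_lim: "(\<lambda>k. w k) \<longlonglongrightarrow> x"
    if "\<And>k. w k \<in> unit_cube n" "\<And>k j. j < n \<Longrightarrow> \<bar>w k j - z (\<sigma> k) j\<bar> \<le> 1 / real (Suc (\<sigma> k))" for w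
  proof (rule tendsto_fun_close[OF lim mesh])
    show "\<bar>w k j - (z \<circ> \<sigma>) k j\<bar> \<le> 1 / real (Suc (\<sigma> k))" for k j
      using that z[of "\<sigma> k"] by (cases "j < n") (auto simp: unit_cube_def)
  qed
  have F_lim: "(\<lambda>k. F (w k) i) \<longlonglongrightarrow> F x i" if "\<And>k. w k \<in> unit_cube n" "w \<longlonglongrightarrow> x" for w i
    using continuous_on_tendsto_compose[OF cont that(2) x] that(1)
    by (simp add: tendsto_fun_iff_componentwise)
  have "F x i = x i" if i: "i < n" for i
  proof (rule antisym)
    have u_lim: "(\<lambda>k. u (\<sigma> k) i) \<longlonglongrightarrow> x" and v_lim: "(\<lambda>k. v (\<sigma> k) i) \<longlonglongrightarrow> x"
      using uv[OF i] by (auto intro!: close_lim)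
    show "x i \<le> F x i"
      using u_lim F_lim[OF _ u_lim] uv[OF i]
      by (intro LIMSEQ_le[of "\<lambda>k. u (\<sigma> k) i i" _ "\<lambda>k. F (u (\<sigma> k) i) i"]) (auto simp: tendsto_fun_iff_componentwise)
    show "F x i \<le> x i"
      using v_lim F_lim[OF _ v_lim] uv[OF i]
      by (intro LIMSEQ_le[of "\<lambda>k. F (v (\<sigma> k) i) i" _ "\<lambda>k. v (\<sigma> k) i i"]) (auto simp: tendsto_fun_iff_componentwise)
  qed
  moreover have "F x i = x i" if "n \<le> i" for i
    using maps x that by (auto simp: unit_cube_def)
  ultimately show ?thesis
    using x by (metis not_le ext)
qed

definition prob_simplex :: "nat \<Rightarrow> (nat \<Rightarrow> real) set" where
  "prob_simplex m = {t. (\<forall>i. 0 \<le> t i) \<and> (\<forall>i\<ge>m. t i = 0) \<and> (\<Sum>i<m. t i) = 1}"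

lemma prob_simplex_subset_unit_cube: "prob_simplex m \<subseteq> unit_cube m"
proof
  fix t assume t: "t \<in> prob_simplex m"
  have "t i \<le> 1" if "i < m" for i
    using t member_le_sum[of i "{..<m}" t] that by (auto simp: prob_simplex_def)
  then show "t \<in> unit_cube m"
    using t by (auto simp: prob_simplex_def unit_cube_def)
qed

lemma prob_simplex_retract_of_unit_cube:
  assumes "0 < m"
  shows "prob_simplex m retract_of unit_cube m"
proof -
  define s where "s t = max 1 (\<Sum>i<m. t i)" for t :: "nat \<Rightarrow> real"
  \<comment> \<open>Scale into the corner simplex, then put the missing mass on coordinate 0.\<close>
  define r where "r t i = t i / s t + (if i = 0 then 1 - (\<Sum>j<m. t j) / s t else 0)" for t i
  have s_ge: "1 \<le> s t" "(\<Sum>i<m. t i) \<le> s t" for t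
    by (auto simp: s_def)
  have s_nz: "s t \<noteq> 0" for t
    using s_ge(1)[of t] by linarith
  have "continuous_on (unit_cube m) r"
  proof (intro continuous_on_coordinatewise_then_product)
    have "continuous_on (unit_cube m) s"
      unfolding s_def by (intro continuous_intros)
    then show "continuous_on (unit_cube m) (\<lambda>t. r t i)" for i
      unfolding r_def by (cases "i = 0"; simp; intro continuous_intros; simp add: s_nz)
  qed
  moreover have "r \<in> unit_cube m \<rightarrow> prob_simplex m"
  proof
    fix t assume t: "t \<in> unit_cube m"
    have t_nonneg: "0 \<le> t i" for i
      using t by (cases "i < m") (auto simp: unit_cube_def)
    then have "0 \<le> (\<Sum>j<m. t j)"
      by (simp add: sum_nonneg)
    then have "0 \<le> 1 - (\<Sum>j<m. t j) / s t"
      using s_ge[of t] by simp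
    then have "0 \<le> r t i" for i
      using t_nonneg[of i] s_ge(1)[of t] by (simp add: r_def)
    moreover have "r t i = 0" if "m \<le> i" for i
      using t that assms by (simp add: r_def unit_cube_def)
    moreover have "(\<Sum>i<m. r t i) = 1"
      using assms by (simp add: r_def sum.distrib sum_divide_distrib)
    ultimately show "r t \<in> prob_simplex m"
      by (simp add: prob_simplex_def)
  qed
  moreover have "r t = t" if "t \<in> prob_simplex m" for t
    using that by (auto simp: prob_simplex_def r_def s_def)
  ultimately show ?thesis
    using prob_simplex_subset_unit_cube unfolding retract_of_def retraction_def by blast
qed

lemma brouwer_prob_simplex:
  assumes "0 < m" and "continuous_on (prob_simplex m) F" and "F \<in> prob_simplex m \<rightarrow> prob_simplex m"
  obtains t where "t \<in> prob_simplex m" and "F t = t"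
  using retract_fixpoint_property[OF prob_simplex_retract_of_unit_cube[OF assms(1)] brouwer_unit_cube assms(2,3)]
  by blast

lemma prob_simplex_nash_fixpoint:
  fixes \<phi> :: "nat \<Rightarrow> (nat \<Rightarrow> real) \<Rightarrow> real"
  assumes m: "0 < m" and cont: "\<And>j. j < m \<Longrightarrow> continuous_on (prob_simplex m) (\<phi> j)"
  obtains t where "t \<in> prob_simplex m"
    and "\<And>j. j < m \<Longrightarrow> max 0 (\<phi> j t) = t j * (\<Sum>i<m. max 0 (\<phi> i t))"
proof -
  define g where "g j t = max 0 (\<phi> j t)" for j t
  define G where "G t = (\<Sum>j<m. g j t)" for t
  define N where "N t j = (if j < m then (t j + g j t) / (1 + G t) else 0)" for t j
  have g_nonneg: "0 \<le> g j t" for j t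
    by (simp add: g_def)
  have G_pos: "0 < 1 + G t" for t
    using g_nonneg by (simp add: G_def add_pos_nonneg sum_nonneg)
  have g_cont: "continuous_on (prob_simplex m) (g j)" if "j < m" for j
    unfolding g_def using cont[OF that] by (intro continuous_intros)
  then have "continuous_on (prob_simplex m) G"
    unfolding G_def by (intro continuous_intros) simp
  then have "continuous_on (prob_simplex m) (\<lambda>t. N t j)" for j
    unfolding N_def using g_cont G_pos
    by (cases "j < m"; simp; intro continuous_intros; simp add: less_imp_neq[symmetric])
  then have "continuous_on (prob_simplex m) N"
    by (rule continuous_on_coordinatewise_then_product)
  moreover have "N \<in> prob_simplex m \<rightarrow> prob_simplex m"
  proof
    fix t assume t: "t \<in> prob_simplex m"
    have "(\<Sum>j<m. N t j) = (\<Sum>j<m. t j + g j t) / (1 + G t)"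
      by (simp add: N_def sum_divide_distrib)
    also have "\<dots> = 1"
      using t G_pos[of t] by (simp add: sum.distrib G_def prob_simplex_def)
    finally show "N t \<in> prob_simplex m"
      using t g_nonneg G_pos[of t] by (auto simp: prob_simplex_def N_def)
  qed
  ultimately obtain t where t: "t \<in> prob_simplex m" and fixed: "N t = t"
    using brouwer_prob_simplex[OF m] by blast
  have "g j t = t j * G t" if "j < m" for j
  proof -
    have "t j = (t j + g j t) / (1 + G t)"
      using fixed that by (metis N_def)
    then show ?thesis
      using G_pos[of t] by (simp add: field_simps)
  qed
  then show thesis
    using that t by (simp add: g_def G_def)
qed

lemma nonpos_if_gains_proportional:
  fixes \<phi> t :: "nat \<Rightarrow> real"
  assumes t: "t \<in> prob_simplex m"
    and proportional: "\<And>j. j < m \<Longrightarrow> max 0 (\<phi> j) = t j * (\<Sum>i<m. max 0 (\<phi> i))"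
    and average: "(\<Sum>j<m. t j * \<phi> j) \<le> 0"
    and "j < m"
  shows "\<phi> j \<le> 0"
proof -
  define G where "G = (\<Sum>i<m. max 0 (\<phi> i))"
  \<comment> \<open>If G > 0, then t j > 0 forces a positive gain at j, so the average equals G * (\<Sum>j<m. t j * t j) > 0.\<close>
  have "G = 0"
  proof (rule ccontr)
    assume "G \<noteq> 0"
    then have G_pos: "0 < G"
      by (simp add: G_def order_le_neq_trans sum_nonneg)
    have "t j * \<phi> j = G * (t j * t j)" if "j < m" for j
    proof (cases "t j = 0")
      case False
      then have "0 < max 0 (\<phi> j)"
        using t G_pos proportional[OF that] by (simp add: G_def prob_simplex_def order_le_neq_trans)
      then show ?thesis
        using proportional[OF that] by (simp add: G_def max_def split: if_splits)
    qed simp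
    then have "(\<Sum>j<m. t j * \<phi> j) = G * (\<Sum>j<m. t j * t j)"
      unfolding sum_distrib_left by (intro sum.cong) auto
    moreover have "(\<Sum>j<m. t j * t j) \<noteq> 0"
    proof
      assume "(\<Sum>j<m. t j * t j) = 0"
      then have "\<forall>j<m. t j = 0"
        by (simp add: sum_nonneg_eq_0_iff)
      then show False
        using t by (simp add: prob_simplex_def)
    qed
    ultimately have "0 < (\<Sum>j<m. t j * \<phi> j)"
      using G_pos by (simp add: sum_nonneg order_le_neq_trans)
    then show False
      using average by simp
  qed
  then show ?thesis
    using proportional[OF \<open>j < m\<close>] by (simp add: G_def)
qed

lemma prob_simplex_all_nonpos_if_average_nonpos:
  fixes \<phi> :: "nat \<Rightarrow> (nat \<Rightarrow> real) \<Rightarrow> real"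
  assumes m: "0 < m"
    and cont: "\<And>j. j < m \<Longrightarrow> continuous_on (prob_simplex m) (\<phi> j)"
    and average: "\<And>t. t \<in> prob_simplex m \<Longrightarrow> (\<Sum>j<m. t j * \<phi> j t) \<le> 0"
  obtains t where "t \<in> prob_simplex m" and "\<And>j. j < m \<Longrightarrow> \<phi> j t \<le> 0"
proof -
  obtain t where t: "t \<in> prob_simplex m"
    and proportional: "\<And>j. j < m \<Longrightarrow> max 0 (\<phi> j t) = t j * (\<Sum>i<m. max 0 (\<phi> i t))"
    using prob_simplex_nash_fixpoint[of m \<phi>] m cont by blast
  show thesis
    using that[OF t] nonpos_if_gains_proportional[OF t proportional average[OF t]] by blast
qed

lemma continuous_on_tvs_add:
  fixes f g :: "'b::topological_space \<Rightarrow> 'a::{real_vector, topological_space}"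
  assumes "real_tvs TYPE('a)" and "continuous_on S f" and "continuous_on S g"
  shows "continuous_on S (\<lambda>x. f x + g x)"
proof -
  have "continuous_on UNIV (\<lambda>z::'a \<times> 'a. fst z + snd z)"
    using assms(1) by (simp add: real_tvs_def)
  from continuous_on_compose2[OF this continuous_on_Pair[OF assms(2,3)] subset_UNIV]
  show ?thesis by simp
qed

lemma continuous_on_tvs_scaleR:
  fixes f :: "'b::topological_space \<Rightarrow> real" and g :: "'b \<Rightarrow> 'a::{real_vector, topological_space}"
  assumes "real_tvs TYPE('a)" and "continuous_on S f" and "continuous_on S g"
  shows "continuous_on S (\<lambda>x. f x *\<^sub>R g x)"
proof -
  have "continuous_on UNIV (\<lambda>z::real \<times> 'a. fst z *\<^sub>R snd z)"
    using assms(1) by (simp add: real_tvs_def)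
  from continuous_on_compose2[OF this continuous_on_Pair[OF assms(2,3)] subset_UNIV]
  show ?thesis by simp
qed

lemma continuous_on_tvs_sum:
  fixes f :: "'i \<Rightarrow> 'b::topological_space \<Rightarrow> 'a::{real_vector, topological_space}"
  assumes "real_tvs TYPE('a)" and "\<And>i. i \<in> I \<Longrightarrow> continuous_on S (f i)"
  shows "continuous_on S (\<lambda>x. \<Sum>i\<in>I. f i x)"
  using assms(2)
proof (induction I rule: infinite_finite_induct)
  case (insert i I)
  then show ?case
    by (simp add: continuous_on_tvs_add[OF assms(1)])
qed simp_all

lemma real_tvs_vec:
  assumes "real_tvs TYPE('a::{real_vector, topological_space})"
  shows "real_tvs TYPE('a ^ 'n)"
  unfolding real_tvs_def plus_vec_def scaleR_vec_def
  by (intro conjI continuous_on_vec_lambda continuous_on_tvs_add[OF assms] continuous_on_tvs_scaleR[OF assms]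
      continuous_on_component continuous_on_fst continuous_on_snd continuous_on_id)

lemma upd_nth: "upd x \<nu> c $ j = (if j = \<nu> then c else x $ j)"
  by (simp add: upd_def)

lemma upd_self: "upd x \<nu> (x $ \<nu>) = x"
  by (simp add: vec_eq_iff upd_nth)

lemma upd_in_prod_space: "x \<in> prod_space S \<Longrightarrow> c \<in> S \<nu> \<Longrightarrow> upd x \<nu> c \<in> prod_space S"
  by (simp add: prod_space_def upd_nth)

lemma subspace_prod_space: "(\<And>\<nu>. subspace (S \<nu>)) \<Longrightarrow> subspace (prod_space S)"
  by (simp add: subspace_def prod_space_def)

lemma continuous_on_upd:
  assumes "continuous_on T f"
  shows "continuous_on T (\<lambda>x. upd (f x) \<nu> c)"
  unfolding upd_def
proof (intro continuous_on_vec_lambda)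
  show "continuous_on T (\<lambda>x. if j = \<nu> then c else f x $ j)" for j
    using assms by (cases "j = \<nu>") (simp_all add: continuous_on_component)
qed

lemma continuous_on_f0:
  assumes cont: "\<And>\<nu>. continuous_on (prod_space S) (\<theta> \<nu>)"
    and y: "continuous_on T y" "y ` T \<subseteq> prod_space S" and a: "a \<in> prod_space S"
  shows "continuous_on T (\<lambda>t. f0 \<theta> a (y t))"
proof -
  have "upd (y t) \<nu> (a $ \<nu>) \<in> prod_space S" if "t \<in> T" for t \<nu>
    using y(2) a that by (intro upd_in_prod_space) (auto simp: prod_space_def)
  then have "continuous_on T (\<lambda>t. \<theta> \<nu> (upd (y t) \<nu> (a $ \<nu>)))" for \<nu>
    by (intro continuous_on_compose2[OF cont continuous_on_upd[OF y(1)]]) auto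
  moreover have "continuous_on T (\<lambda>t. \<theta> \<nu> (y t))" for \<nu>
    by (rule continuous_on_compose2[OF cont y])
  ultimately show ?thesis
    unfolding f0_def by (intro continuous_on_sum continuous_on_diff)
qed

lemma f0_convex_combination_nonpos:
  assumes conv: "\<And>\<nu> x. x \<in> prod_space S \<Longrightarrow> convex_on (S \<nu>) (\<lambda>t. \<theta> \<nu> (upd x \<nu> t))"
    and J: "finite J" and \<mu>: "\<And>j. j \<in> J \<Longrightarrow> 0 \<le> \<mu> j" "(\<Sum>j\<in>J. \<mu> j) = 1"
    and a: "\<And>j. j \<in> J \<Longrightarrow> a j \<in> prod_space S"
    and y: "y = (\<Sum>j\<in>J. \<mu> j *\<^sub>R a j)" "y \<in> prod_space S"
  shows "(\<Sum>j\<in>J. \<mu> j * f0 \<theta> (a j) y) \<le> 0"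
proof -
  have "J \<noteq> {}"
    using \<mu>(2) by auto
  have jensen: "\<theta> \<nu> y \<le> (\<Sum>j\<in>J. \<mu> j * \<theta> \<nu> (upd y \<nu> (a j $ \<nu>)))" for \<nu>
  proof -
    have "(\<Sum>j\<in>J. \<mu> j *\<^sub>R (a j $ \<nu>)) = y $ \<nu>"
      using y(1) by simp
    moreover have "\<theta> \<nu> (upd y \<nu> (\<Sum>j\<in>J. \<mu> j *\<^sub>R (a j $ \<nu>))) \<le> (\<Sum>j\<in>J. \<mu> j * \<theta> \<nu> (upd y \<nu> (a j $ \<nu>)))"
      using a \<mu> by (intro convex_on_sum[OF J \<open>J \<noteq> {}\<close> conv[OF y(2)]]) (auto simp: prod_space_def)
    ultimately show ?thesis
      by (simp add: upd_self)
  qed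
  have "(\<Sum>j\<in>J. \<mu> j * f0 \<theta> (a j) y) = (\<Sum>\<nu>\<in>UNIV. \<Sum>j\<in>J. \<mu> j * (\<theta> \<nu> y - \<theta> \<nu> (upd y \<nu> (a j $ \<nu>))))"
    unfolding f0_def by (simp add: sum_distrib_left sum.swap[of _ J])
  also have "\<dots> = (\<Sum>\<nu>\<in>UNIV. \<theta> \<nu> y - (\<Sum>j\<in>J. \<mu> j * \<theta> \<nu> (upd y \<nu> (a j $ \<nu>))))"
    by (simp add: right_diff_distrib sum_subtractf \<mu>(2) flip: sum_distrib_right)
  also have "\<dots> \<le> 0"
    using jensen by (simp add: sum_nonpos)
  finally show ?thesis .
qed

lemma f0_nonpos_at_simplex_combination:
  fixes S :: "'n::finite \<Rightarrow> 'a::{real_vector, topological_space} set"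
  assumes tvs: "real_tvs TYPE('a)"
    and subspaces: "\<And>\<nu>. subspace (S \<nu>)"
    and cont: "\<And>\<nu>. continuous_on (prod_space S) (\<theta> \<nu>)"
    and conv: "\<And>\<nu> x. x \<in> prod_space S \<Longrightarrow> convex_on (S \<nu>) (\<lambda>t. \<theta> \<nu> (upd x \<nu> t))"
    and m: "0 < m" and b: "\<And>j. j < m \<Longrightarrow> b j \<in> prod_space S"
  obtains t where "t \<in> prob_simplex m" and "\<And>j. j < m \<Longrightarrow> f0 \<theta> (b j) (\<Sum>i<m. t i *\<^sub>R b i) \<le> 0"
proof -
  define x where "x t = (\<Sum>i<m. t i *\<^sub>R b i)" for t
  have x_in: "x t \<in> prod_space S" for t
    unfolding x_def using subspace_prod_space[OF subspaces] b by (intro subspace_sum subspace_scale) auto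
  have x_cont: "continuous_on UNIV x"
    unfolding x_def
    by (intro continuous_on_tvs_sum continuous_on_tvs_scaleR real_tvs_vec[OF tvs] continuous_on_fun_apply continuous_on_const)
  show thesis
  proof (rule prob_simplex_all_nonpos_if_average_nonpos[OF m])
    show "continuous_on (prob_simplex m) (\<lambda>t. f0 \<theta> (b j) (x t))" if "j < m" for j
      using x_in by (intro continuous_on_f0[OF cont continuous_on_subset[OF x_cont] _ b[OF that]]) auto
    show "(\<Sum>j<m. t j * f0 \<theta> (b j) (x t)) \<le> 0" if "t \<in> prob_simplex m" for t
      using that b x_in by (intro f0_convex_combination_nonpos[OF conv]) (auto simp: prob_simplex_def x_def)
  qed (use that x_def in auto)
qed

theorem proposition6p3:
  fixes S :: "'n::finite \<Rightarrow> 'a::{real_vector, topological_space} set"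
    and C :: "('a ^ 'n) set"
    and \<theta> :: "'n \<Rightarrow> 'a ^ 'n \<Rightarrow> real"
  assumes tvs: "real_tvs TYPE('a)"
    and subspaces: "\<And>\<nu>. subspace (S \<nu>)"
    and C_sub: "C \<subseteq> prod_space S"
    and C_convex: "convex C"
    and cont: "\<And>\<nu>. continuous_on (prod_space S) (\<theta> \<nu>)"
    and conv: "\<And>\<nu> x. x \<in> prod_space S \<Longrightarrow> convex_on (S \<nu>) (\<lambda>t. \<theta> \<nu> (upd x \<nu> t))"
  shows "fip_star (f0 \<theta>) C"
  unfolding fip_star_def
proof (intro allI impI, elim conjE)
  fix A assume A: "finite A" "A \<noteq> {}" "A \<subseteq> C"
  then have m: "0 < card A"
    by (simp add: card_gt_0_iff)
  obtain b where b: "bij_betw b {..<card A} A"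
    using ex_bij_betw_nat_finite[OF A(1)] by (auto simp: atLeast0LessThan)
  then have b_A: "b j \<in> A" if "j < card A" for j
    using that by (auto simp: bij_betw_def)
  obtain t where t: "t \<in> prob_simplex (card A)"
    and nonpos: "\<And>j. j < card A \<Longrightarrow> f0 \<theta> (b j) (\<Sum>i<card A. t i *\<^sub>R b i) \<le> 0"
    using f0_nonpos_at_simplex_combination[OF tvs subspaces cont conv m] b_A A(3) C_sub by blast
  have "(\<Sum>i<card A. t i *\<^sub>R b i) \<in> convex hull A"
    using t b_A by (intro convex_sum convex_convex_hull) (auto simp: prob_simplex_def intro: hull_inc)
  moreover have "f0 \<theta> a (\<Sum>i<card A. t i *\<^sub>R b i) \<le> 0" if "a \<in> A" for a
  proof -
    have "a \<in> b ` {..<card A}"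
      using that b by (simp add: bij_betw_def)
    then show ?thesis
      using nonpos by auto
  qed
  ultimately show "\<exists>x\<in>convex hull A. Max ((\<lambda>a. f0 \<theta> a x) ` A) \<le> 0"
    using A(1,2) by auto
qed

end
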